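(* Let $(\Omega,\mathcal F,\mathbf P)$ be a probability space, $L^\infty=L^\infty(\Omega,\mathcal F,\mathbf P)$ with its norm dual $(L^\infty)^*$, and let $C\subset L^\infty$ be a convex cone such that $C\cap L^\infty_+=\{0\}$, where $L^\infty_+$ is the set of a.s. non-negative elements. Let $C^\circ=\{\xi\in (L^\infty)^*:\langle x,\xi\rangle\le 0 \text{ for all } x\in C\}$. Then for any $f\in (L^\infty)^*$ the following conditions are equivalent: (i) $\sup_{x\in C_1}\langle x,f\rangle<+\infty$, where $C_1=\{x\in C: x^-\le 1 \text{ a.s.}\}$; (ii) there exists $g\in (L^\infty)^*$ such that $g\ge f$ and $g\in C^\circ$.
   Context: $x^-=\max\{-x,0\}$. For $f,g\in (L^\infty)^*$, $g\ge f$ means $\langle x,g-f\rangle\ge 0$ for all $x\in L^\infty_+$. *)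

theory Defs
  imports "HOL-Probability.Probability"
begin

text \<open>Elements of L-infinity are represented by measurable, essentially bounded
  real functions (equivalence classes are handled by letting all notions respect
  a.e. equality).\<close>
definition Linf :: "'a measure \<Rightarrow> ('a \<Rightarrow> real) set" where
  "Linf M = {x. x \<in> borel_measurable M \<and> (\<exists>B. AE \<omega> in M. \<bar>x \<omega>\<bar> \<le> B)}"

definition linf_norm :: "'a measure \<Rightarrow> ('a \<Rightarrow> real) \<Rightarrow> real" where
  "linf_norm M x = real_of_ereal (esssup M (\<lambda>\<omega>. ereal \<bar>x \<omega>\<bar>))"

definition Linf_dual :: "'a measure \<Rightarrow> (('a \<Rightarrow> real) \<Rightarrow> real) set" where
  "Linf_dual M = {\<phi>.
     (\<forall>x\<in>Linf M. \<forall>y\<in>Linf M. \<phi> (\<lambda>\<omega>. x \<omega> + y \<omega>) = \<phi> x + \<phi> y) \<and>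
     (\<forall>x\<in>Linf M. \<forall>a::real. \<phi> (\<lambda>\<omega>. a * x \<omega>) = a * \<phi> x) \<and>
     (\<exists>K. \<forall>x\<in>Linf M. \<bar>\<phi> x\<bar> \<le> K * linf_norm M x)}"

definition Linf_pos :: "'a measure \<Rightarrow> ('a \<Rightarrow> real) set" where
  "Linf_pos M = {x \<in> Linf M. AE \<omega> in M. 0 \<le> x \<omega>}"

definition dual_ge :: "'a measure \<Rightarrow> (('a \<Rightarrow> real) \<Rightarrow> real) \<Rightarrow> (('a \<Rightarrow> real) \<Rightarrow> real) \<Rightarrow> bool" where
  "dual_ge M g f \<longleftrightarrow> (\<forall>x\<in>Linf_pos M. 0 \<le> g x - f x)"

definition convex_cone_fun :: "('a \<Rightarrow> real) set \<Rightarrow> bool" where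
  "convex_cone_fun C \<longleftrightarrow> C \<noteq> {} \<and>
     (\<forall>x\<in>C. \<forall>y\<in>C. (\<lambda>\<omega>. x \<omega> + y \<omega>) \<in> C) \<and>
     (\<forall>x\<in>C. \<forall>a::real. 0 \<le> a \<longrightarrow> (\<lambda>\<omega>. a * x \<omega>) \<in> C)"

definition polar :: "'a measure \<Rightarrow> ('a \<Rightarrow> real) set \<Rightarrow> (('a \<Rightarrow> real) \<Rightarrow> real) set" where
  "polar M C = {\<xi> \<in> Linf_dual M. \<forall>x\<in>C. \<xi> x \<le> 0}"

definition C_one :: "'a measure \<Rightarrow> ('a \<Rightarrow> real) set \<Rightarrow> ('a \<Rightarrow> real) set" where
  "C_one M C = {x \<in> C. AE \<omega> in M. max (- x \<omega>) 0 \<le> 1}"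

end

theory Submission
  imports Defs "HOL-Library.Function_Algebras"
begin

(* Given s = sup over C_1 of f, the functional
     q y = inf { s r - f x | x in C, r >= 0, y <= x + r a.s. }
   is finite and sublinear on L-infinity, with q x <= - f x on C and q (- z) <= 0 for z >= 0.
   Hahn-Banach gives a linear h <= q; it is positive, hence bounded, and g = f + h lies in
   the polar of C and dominates f.  Conversely, for x in C_1 we have 1 + x >= 0, so
   f x <= g x + (g - f) 1 <= (g - f) 1. *)

locale real_vector_space = vector_space scale
  for scale :: "real \<Rightarrow> 'b::ab_group_add \<Rightarrow> 'b" (infixr \<open>*s\<close> 75)
begin

definition dominated_linear_graph :: "'b set \<Rightarrow> ('b \<Rightarrow> real) \<Rightarrow> ('b \<times> real) set \<Rightarrow> bool" where
  "dominated_linear_graph V q G \<longleftrightarrow> G \<subseteq> V \<times> UNIV \<and>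
     (\<forall>x a b. (x, a) \<in> G \<longrightarrow> (x, b) \<in> G \<longrightarrow> a = b) \<and> (0, 0) \<in> G \<and>
     (\<forall>x a y b. (x, a) \<in> G \<longrightarrow> (y, b) \<in> G \<longrightarrow> (x + y, a + b) \<in> G) \<and>
     (\<forall>x a c. (x, a) \<in> G \<longrightarrow> (c *s x, c * a) \<in> G) \<and> (\<forall>x a. (x, a) \<in> G \<longrightarrow> a \<le> q x)"

lemma dominated_linear_graph_Union_chain:
  assumes chain: "\<G> \<in> chains {G. dominated_linear_graph V q G}" and "\<G> \<noteq> {}"
  shows "dominated_linear_graph V q (\<Union>\<G>)"
proof -
  have dlg: "dominated_linear_graph V q G" if "G \<in> \<G>" for G
    using chain that unfolding chains_def by blast
  have common: "\<exists>G\<in>\<G>. p \<in> G \<and> p' \<in> G" if "p \<in> \<Union>\<G>" "p' \<in> \<Union>\<G>" for p p'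
    using that chain unfolding chains_def chain_subset_def by blast
  show ?thesis
    unfolding dominated_linear_graph_def
  proof (intro conjI allI impI)
    show "\<Union>\<G> \<subseteq> V \<times> UNIV" "(0, 0) \<in> \<Union>\<G>"
      using dlg \<open>\<G> \<noteq> {}\<close> unfolding dominated_linear_graph_def by blast+
    show "a = b" if "(x, a) \<in> \<Union>\<G>" "(x, b) \<in> \<Union>\<G>" for x a b
      using common[OF that] dlg unfolding dominated_linear_graph_def by blast
    show "(x + y, a + b) \<in> \<Union>\<G>" if "(x, a) \<in> \<Union>\<G>" "(y, b) \<in> \<Union>\<G>" for x a y b
      using common[OF that] dlg unfolding dominated_linear_graph_def by blast
    show "(c *s x, c * a) \<in> \<Union>\<G>" "a \<le> q x" if "(x, a) \<in> \<Union>\<G>" for x a c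
      using that dlg unfolding dominated_linear_graph_def by blast+
  qed
qed

definition extend_graph :: "('b \<times> real) set \<Rightarrow> 'b \<Rightarrow> real \<Rightarrow> ('b \<times> real) set" where
  "extend_graph G y c = {(x + t *s y, a + t * c) | x a t. (x, a) \<in> G}"

lemma extend_graph_single_valued:
  assumes G: "dominated_linear_graph V q G" and new: "\<And>b. (y, b) \<notin> G"
    and "(z, a) \<in> extend_graph G y c" and "(z, b) \<in> extend_graph G y c"
  shows "a = b"
proof -
  obtain x1 a1 t1 x2 a2 t2 where in_G: "(x1, a1) \<in> G" "(x2, a2) \<in> G"
    and z: "z = x1 + t1 *s y" "z = x2 + t2 *s y" and ab: "a = a1 + t1 * c" "b = a2 + t2 * c"
    using assms(3,4) unfolding extend_graph_def by blast
  have "t1 = t2"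
  proof (rule ccontr)
    assume "t1 \<noteq> t2"
    from z have "(t2 - t1) *s y = x1 + (- 1) *s x2" by (simp add: scale_left_diff_distrib algebra_simps)
    moreover have "y = (1 / (t2 - t1)) *s ((t2 - t1) *s y)" using \<open>t1 \<noteq> t2\<close> by simp
    ultimately have "(y, (1 / (t2 - t1)) * (a1 + (- 1) * a2)) \<in> G"
      using G in_G unfolding dominated_linear_graph_def by metis
    then show False using new by blast
  qed
  then show ?thesis using z ab G in_G unfolding dominated_linear_graph_def by simp
qed

context
  fixes V :: "'b set" and q :: "'b \<Rightarrow> real"
  assumes subspace: "subspace V"
    and subadditive: "\<And>x y. x \<in> V \<Longrightarrow> y \<in> V \<Longrightarrow> q (x + y) \<le> q x + q y"
    and pos_homogeneous: "\<And>x c. x \<in> V \<Longrightarrow> 0 < c \<Longrightarrow> q (c *s x) = c * q x"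
begin

lemma extend_graph_dominated:
  assumes G: "dominated_linear_graph V q G" and "y \<in> V" and "(x, a) \<in> G"
    and lower: "\<And>x a. (x, a) \<in> G \<Longrightarrow> a - q (x - y) \<le> c"
    and upper: "\<And>x a. (x, a) \<in> G \<Longrightarrow> c \<le> q (x + y) - a"
  shows "a + t * c \<le> q (x + t *s y)"
proof -
  have "x \<in> V" using G \<open>(x, a) \<in> G\<close> unfolding dominated_linear_graph_def by blast
  have scaled: "(r *s x, r * a) \<in> G" for r
    using G \<open>(x, a) \<in> G\<close> unfolding dominated_linear_graph_def by blast
  consider "t = 0" | "0 < t" | "t < 0" by linarith
  then show ?thesis
  proof cases
    case 1
    then show ?thesis using G \<open>(x, a) \<in> G\<close> unfolding dominated_linear_graph_def by simp
  next
    case 2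
    define z where "z = (1 / t) *s x + y"
    have "z \<in> V" unfolding z_def using subspace \<open>x \<in> V\<close> \<open>y \<in> V\<close> by (simp add: subspace_add subspace_scale)
    have "c \<le> q z - a / t" using upper[OF scaled[of "1 / t"]] unfolding z_def by simp
    then have "a + t * c \<le> t * q z" using \<open>0 < t\<close> by (simp add: field_simps)
    also have "\<dots> = q (t *s z)" using pos_homogeneous[OF \<open>z \<in> V\<close> \<open>0 < t\<close>] by simp
    also have "t *s z = x + t *s y" unfolding z_def using \<open>0 < t\<close> by (simp add: scale_right_distrib)
    finally show ?thesis .
  next
    case 3
    define u where "u = - t"
    have "0 < u" using \<open>t < 0\<close> unfolding u_def by simp
    define z where "z = (1 / u) *s x - y"
    have "z \<in> V" unfolding z_def using subspace \<open>x \<in> V\<close> \<open>y \<in> V\<close> by (simp add: subspace_diff subspace_scale)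
    have "a / u - q z \<le> c" using lower[OF scaled[of "1 / u"]] unfolding z_def by simp
    then have "a + t * c \<le> u * q z" using \<open>0 < u\<close> unfolding u_def by (simp add: field_simps)
    also have "\<dots> = q (u *s z)" using pos_homogeneous[OF \<open>z \<in> V\<close> \<open>0 < u\<close>] by simp
    also have "u *s z = x + t *s y" unfolding z_def u_def using \<open>t < 0\<close> by (simp add: scale_right_diff_distrib)
    finally show ?thesis .
  qed
qed

lemma dominated_linear_graph_extend_graph:
  assumes G: "dominated_linear_graph V q G" and "y \<in> V" and new: "\<And>b. (y, b) \<notin> G"
    and lower: "\<And>x a. (x, a) \<in> G \<Longrightarrow> a - q (x - y) \<le> c"
    and upper: "\<And>x a. (x, a) \<in> G \<Longrightarrow> c \<le> q (x + y) - a"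
  shows "dominated_linear_graph V q (extend_graph G y c)"
  unfolding dominated_linear_graph_def
proof (intro conjI allI impI)
  have G_V: "x \<in> V"
    and G_add: "(x', a') \<in> G \<Longrightarrow> (x + x', a + a') \<in> G" and G_scale: "(r *s x, r * a) \<in> G"
    if "(x, a) \<in> G" for x a x' a' r
    using G that unfolding dominated_linear_graph_def by blast+
  have extI: "(x + t *s y, a + t * c) \<in> extend_graph G y c" if "(x, a) \<in> G" for x a t
    using that unfolding extend_graph_def by blast
  show "extend_graph G y c \<subseteq> V \<times> UNIV"
    unfolding extend_graph_def using subspace G_V \<open>y \<in> V\<close> by (auto intro: subspace_add subspace_scale)
  show "(0, 0) \<in> extend_graph G y c"
    using extI[of 0 0 0] G unfolding dominated_linear_graph_def by simp
  show "a = b" if "(z, a) \<in> extend_graph G y c" and "(z, b) \<in> extend_graph G y c" for z a b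
    using G new that by (rule extend_graph_single_valued)
  show "(z + z', a + a') \<in> extend_graph G y c"
    if za: "(z, a) \<in> extend_graph G y c" and za': "(z', a') \<in> extend_graph G y c" for z a z' a'
  proof -
    obtain x a1 t x' a1' t' where "(x, a1) \<in> G" "(x', a1') \<in> G"
      and "z = x + t *s y" "a = a1 + t * c" "z' = x' + t' *s y" "a' = a1' + t' * c"
      using za za' unfolding extend_graph_def by blast
    then show ?thesis
      using extI[OF G_add, of x a1 x' a1' "t + t'"] by (simp add: algebra_simps)
  qed
  show "(r *s z, r * a) \<in> extend_graph G y c" if za: "(z, a) \<in> extend_graph G y c" for z a r
  proof -
    obtain x a1 t where "(x, a1) \<in> G" "z = x + t *s y" "a = a1 + t * c"
      using za unfolding extend_graph_def by blast
    then show ?thesis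
      using extI[OF G_scale, of x a1 r "r * t"] by (simp add: algebra_simps)
  qed
  show "a \<le> q z" if "(z, a) \<in> extend_graph G y c" for z a
    using that extend_graph_dominated[OF G \<open>y \<in> V\<close> _ lower upper]
    unfolding extend_graph_def by blast
qed

lemma dominated_linear_graph_extend:
  assumes G: "dominated_linear_graph V q G" and "y \<in> V" and new: "\<And>b. (y, b) \<notin> G"
  obtains c where "dominated_linear_graph V q (extend_graph G y c)"
proof -
  define L where "L = {a - q (x - y) | x a. (x, a) \<in> G}"
  have below_upper: "l \<le> q (x' + y) - a'" if "l \<in> L" "(x', a') \<in> G" for l x' a'
  proof -
    obtain x a where "(x, a) \<in> G" "l = a - q (x - y)"
      using \<open>l \<in> L\<close> unfolding L_def by blast
    with G \<open>(x', a') \<in> G\<close> have "x \<in> V" "x' \<in> V"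
      unfolding dominated_linear_graph_def by blast+
    from G \<open>(x, a) \<in> G\<close> \<open>(x', a') \<in> G\<close> have "a + a' \<le> q (x + x')"
      unfolding dominated_linear_graph_def by blast
    also have "x + x' = (x - y) + (x' + y)" by simp
    also have "q \<dots> \<le> q (x - y) + q (x' + y)"
      using subspace \<open>x \<in> V\<close> \<open>x' \<in> V\<close> \<open>y \<in> V\<close> by (intro subadditive subspace_diff subspace_add)
    finally show ?thesis using \<open>l = a - q (x - y)\<close> by simp
  qed
  have "(0, 0) \<in> G" using G unfolding dominated_linear_graph_def by blast
  then have "L \<noteq> {}" and "bdd_above L"
    using below_upper[of _ 0 0] unfolding L_def by (auto intro!: bdd_aboveI)
  show ?thesis
  proof (rule that, rule dominated_linear_graph_extend_graph[OF G \<open>y \<in> V\<close> new])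
    show "a - q (x - y) \<le> Sup L" if "(x, a) \<in> G" for x a
      using that \<open>bdd_above L\<close> unfolding L_def by (auto intro: cSup_upper)
    show "Sup L \<le> q (x + y) - a" if "(x, a) \<in> G" for x a
      using that \<open>L \<noteq> {}\<close> below_upper by (auto intro: cSup_least)
  qed
qed

theorem hahn_banach_sublinear:
  "\<exists>h. (\<forall>x\<in>V. \<forall>y\<in>V. h (x + y) = h x + h y) \<and> (\<forall>x\<in>V. \<forall>c. h (c *s x) = c * h x) \<and>
       (\<forall>x\<in>V. h x \<le> q x)"
proof -
  let ?D = "{G. dominated_linear_graph V q G}"
  have "\<exists>G\<in>?D. \<forall>G'\<in>?D. G \<subseteq> G' \<longrightarrow> G' = G"
  proof (rule Zorn_Lemma2, intro ballI)
    fix \<G> assume chain: "\<G> \<in> chains ?D"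
    show "\<exists>U\<in>?D. \<forall>G\<in>\<G>. G \<subseteq> U"
    proof (cases "\<G> = {}")
      case True
      have "q 0 = 0" using pos_homogeneous[of 0 2] subspace_0[OF subspace] by simp
      then have "{(0, 0)} \<in> ?D" using subspace_0[OF subspace] by (simp add: dominated_linear_graph_def)
      then show ?thesis using True by blast
    next
      case False
      then show ?thesis using dominated_linear_graph_Union_chain[OF chain] by blast
    qed
  qed
  then obtain G where G: "dominated_linear_graph V q G"
    and maximal: "\<And>G'. dominated_linear_graph V q G' \<Longrightarrow> G \<subseteq> G' \<Longrightarrow> G' = G"
    by blast
  have total: "\<exists>a. (y, a) \<in> G" if "y \<in> V" for y
  proof (rule ccontr)
    assume "\<nexists>a. (y, a) \<in> G"
    then obtain c where ext: "dominated_linear_graph V q (extend_graph G y c)"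
      using dominated_linear_graph_extend[OF G \<open>y \<in> V\<close>] by blast
    have "G \<subseteq> extend_graph G y c"
      unfolding extend_graph_def by force
    then have "extend_graph G y c = G" using maximal[OF ext] by blast
    moreover have "(y, c) \<in> extend_graph G y c"
      using G unfolding extend_graph_def dominated_linear_graph_def by force
    ultimately show False using \<open>\<nexists>a. (y, a) \<in> G\<close> by blast
  qed
  define h where "h y = (THE a. (y, a) \<in> G)" for y
  have h_eq: "h x = a" if "(x, a) \<in> G" for x a
    unfolding h_def using that G by (auto simp: dominated_linear_graph_def)
  have h_graph: "(x, h x) \<in> G" if "x \<in> V" for x
    using total[OF that] h_eq by blast
  show ?thesis
    using G h_eq h_graph unfolding dominated_linear_graph_def by metis
qed

end

end

interpretation pointwise: real_vector_space "\<lambda>c (x :: 'a \<Rightarrow> real) \<omega>. c * x \<omega>"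
  by unfold_locales (auto simp: plus_fun_def distrib_left distrib_right)

lemma Linf_const [simp]: "(\<lambda>\<omega>. c) \<in> Linf M"
  unfolding Linf_def by auto

lemma Linf_add: "x \<in> Linf M \<Longrightarrow> y \<in> Linf M \<Longrightarrow> (\<lambda>\<omega>. x \<omega> + y \<omega>) \<in> Linf M"
proof -
  assume x: "x \<in> Linf M" and y: "y \<in> Linf M"
  obtain B1 B2 where B1: "AE \<omega> in M. \<bar>x \<omega>\<bar> \<le> B1" and B2: "AE \<omega> in M. \<bar>y \<omega>\<bar> \<le> B2"
    using x y unfolding Linf_def by blast
  have "AE \<omega> in M. \<bar>x \<omega> + y \<omega>\<bar> \<le> B1 + B2"
    using B1 B2 by eventually_elim (auto intro: order.trans[OF abs_triangle_ineq] add_mono)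
  then show ?thesis using x y unfolding Linf_def by auto
qed

lemma Linf_scale: "x \<in> Linf M \<Longrightarrow> (\<lambda>\<omega>. c * x \<omega>) \<in> Linf M"
proof -
  assume x: "x \<in> Linf M"
  obtain B where B: "AE \<omega> in M. \<bar>x \<omega>\<bar> \<le> B"
    using x unfolding Linf_def by blast
  have "AE \<omega> in M. \<bar>c * x \<omega>\<bar> \<le> \<bar>c\<bar> * B"
    using B by eventually_elim (auto simp: abs_mult intro: mult_left_mono)
  then show ?thesis using x unfolding Linf_def by auto
qed

lemma subspace_Linf: "pointwise.subspace (Linf M)"
  unfolding pointwise.subspace_def using Linf_add Linf_scale by (auto simp: zero_fun_def plus_fun_def)

lemma AE_abs_le_linf_norm:
  assumes "x \<in> Linf M"
  shows "AE \<omega> in M. \<bar>x \<omega>\<bar> \<le> linf_norm M x"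
proof (cases "emeasure M (space M) = 0")
  case True
  then show ?thesis by (rule emeasure_0_AE)
next
  case False
  obtain B where "x \<in> borel_measurable M" and B: "AE \<omega> in M. \<bar>x \<omega>\<bar> \<le> B"
    using assms unfolding Linf_def by blast
  define E where "E = esssup M (\<lambda>\<omega>. ereal \<bar>x \<omega>\<bar>)"
  have "(\<lambda>\<omega>. ereal \<bar>x \<omega>\<bar>) \<in> borel_measurable M" using \<open>x \<in> borel_measurable M\<close> by measurable
  then have "E \<le> ereal B" unfolding E_def using B by (intro esssup_I) auto
  moreover have "0 \<le> E"
    using esssup_AE_mono[of "\<lambda>_. ereal 0" M "\<lambda>\<omega>. ereal \<bar>x \<omega>\<bar>"] esssup_const[OF False, of "ereal 0"]
    unfolding E_def by (simp add: zero_ereal_def)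
  ultimately have "E = ereal (linf_norm M x)" unfolding linf_norm_def E_def[symmetric]
    by (cases E) auto
  then show ?thesis using esssup_AE[of "\<lambda>\<omega>. ereal \<bar>x \<omega>\<bar>" M] unfolding E_def by simp
qed

lemma Linf_dual_add: "f \<in> Linf_dual M \<Longrightarrow> x \<in> Linf M \<Longrightarrow> y \<in> Linf M \<Longrightarrow> f (\<lambda>\<omega>. x \<omega> + y \<omega>) = f x + f y"
  unfolding Linf_dual_def by blast

lemma Linf_dual_scale: "f \<in> Linf_dual M \<Longrightarrow> x \<in> Linf M \<Longrightarrow> f (\<lambda>\<omega>. c * x \<omega>) = c * f x"
  unfolding Linf_dual_def by blast

lemma Linf_dual_zero: "f \<in> Linf_dual M \<Longrightarrow> f (\<lambda>\<omega>. 0) = 0"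
  using Linf_dual_scale[of f M "\<lambda>\<omega>. 0" 0] by simp

lemma Linf_dual_plus:
  assumes "f \<in> Linf_dual M" and "g \<in> Linf_dual M"
  shows "(\<lambda>x. f x + g x) \<in> Linf_dual M"
proof -
  obtain K L where K: "\<And>x. x \<in> Linf M \<Longrightarrow> \<bar>f x\<bar> \<le> K * linf_norm M x"
    and L: "\<And>x. x \<in> Linf M \<Longrightarrow> \<bar>g x\<bar> \<le> L * linf_norm M x"
    using assms unfolding Linf_dual_def by blast
  have bound: "\<bar>f x + g x\<bar> \<le> (K + L) * linf_norm M x" if "x \<in> Linf M" for x
  proof -
    have "\<bar>f x + g x\<bar> \<le> \<bar>f x\<bar> + \<bar>g x\<bar>" by (rule abs_triangle_ineq)
    also have "\<dots> \<le> K * linf_norm M x + L * linf_norm M x" using K[OF that] L[OF that] by (rule add_mono)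
    finally show ?thesis by (simp add: distrib_right)
  qed
  then have "\<exists>K. \<forall>x\<in>Linf M. \<bar>f x + g x\<bar> \<le> K * linf_norm M x" by blast
  then show ?thesis
    using assms unfolding Linf_dual_def by (simp add: distrib_left)
qed

lemma positive_linear_in_Linf_dual:
  assumes add: "\<And>x y. x \<in> Linf M \<Longrightarrow> y \<in> Linf M \<Longrightarrow> h (\<lambda>\<omega>. x \<omega> + y \<omega>) = h x + h y"
    and scale: "\<And>x c. x \<in> Linf M \<Longrightarrow> h (\<lambda>\<omega>. c * x \<omega>) = c * h x"
    and positive: "\<And>x. x \<in> Linf_pos M \<Longrightarrow> 0 \<le> h x"
  shows "h \<in> Linf_dual M"
proof -
  have "\<bar>h x\<bar> \<le> h (\<lambda>\<omega>. 1) * linf_norm M x" if x: "x \<in> Linf M" for x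
  proof -
    define n where "n = linf_norm M x"
    have bound: "AE \<omega> in M. \<bar>x \<omega>\<bar> \<le> n" unfolding n_def using AE_abs_le_linf_norm[OF x] .
    have "0 \<le> n * h (\<lambda>\<omega>. 1) + c * h x" if "\<bar>c\<bar> = 1" for c
    proof -
      have "AE \<omega> in M. 0 \<le> n + c * x \<omega>"
        using bound by eventually_elim (use that in \<open>auto simp: abs_le_iff abs_if split: if_splits\<close>)
      then have "(\<lambda>\<omega>. n + c * x \<omega>) \<in> Linf_pos M"
        unfolding Linf_pos_def using Linf_add[OF Linf_const Linf_scale[OF x]] by blast
      then have "0 \<le> h (\<lambda>\<omega>. n + c * x \<omega>)" by (rule positive)
      also have "\<dots> = h (\<lambda>\<omega>. n * 1) + h (\<lambda>\<omega>. c * x \<omega>)"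
        using add[OF Linf_const Linf_scale[OF x]] by simp
      also have "\<dots> = n * h (\<lambda>\<omega>. 1) + c * h x"
        using scale[of "\<lambda>\<omega>. 1" n] scale[OF x] by simp
      finally show ?thesis .
    qed
    from this[of 1] this[of "- 1"] show ?thesis unfolding n_def by (simp add: mult.commute)
  qed
  then show ?thesis unfolding Linf_dual_def using add scale by blast
qed

lemma convex_cone_fun_zero:
  assumes "convex_cone_fun C"
  shows "(\<lambda>\<omega>. 0) \<in> C"
proof -
  obtain x where "x \<in> C" using assms unfolding convex_cone_fun_def by blast
  then have "(\<lambda>\<omega>. 0 * x \<omega>) \<in> C" using assms unfolding convex_cone_fun_def by blast
  then show ?thesis by simp
qed

lemma convex_cone_fun_add: "convex_cone_fun C \<Longrightarrow> x \<in> C \<Longrightarrow> y \<in> C \<Longrightarrow> (\<lambda>\<omega>. x \<omega> + y \<omega>) \<in> C"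
  unfolding convex_cone_fun_def by blast

lemma convex_cone_fun_scale: "convex_cone_fun C \<Longrightarrow> x \<in> C \<Longrightarrow> 0 \<le> c \<Longrightarrow> (\<lambda>\<omega>. c * x \<omega>) \<in> C"
  unfolding convex_cone_fun_def by blast

lemma cInf_le_cInf_add:
  fixes A B D :: "'a::{conditionally_complete_linorder, ordered_ab_group_add} set"
  assumes "A \<noteq> {}" "B \<noteq> {}" "bdd_below D" and sums: "\<And>a b. a \<in> A \<Longrightarrow> b \<in> B \<Longrightarrow> a + b \<in> D"
  shows "Inf D \<le> Inf A + Inf B"
proof -
  have "Inf D - b \<le> Inf A" if "b \<in> B" for b
    using \<open>A \<noteq> {}\<close> sums[OF _ that] \<open>bdd_below D\<close>
    by (intro cInf_greatest) (auto simp: diff_le_eq intro: cInf_lower)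
  then have "Inf D - Inf A \<le> Inf B"
    using \<open>B \<noteq> {}\<close> by (intro cInf_greatest) (auto simp: diff_le_eq add.commute)
  then show ?thesis by (simp add: diff_le_eq add.commute)
qed

lemma SUP_ereal_less_infinity_iff: "(\<Squnion>x\<in>A. ereal (f x)) < \<infinity> \<longleftrightarrow> (\<exists>s. \<forall>x\<in>A. f x \<le> s)"
proof
  assume less: "(\<Squnion>x\<in>A. ereal (f x)) < \<infinity>"
  have "f x \<le> real_of_ereal (\<Squnion>x\<in>A. ereal (f x))" if "x \<in> A" for x
    using SUP_upper[OF that, of "\<lambda>x. ereal (f x)"] less
    by (cases "\<Squnion>x\<in>A. ereal (f x)") auto
  then show "\<exists>s. \<forall>x\<in>A. f x \<le> s" by blast
next
  assume "\<exists>s. \<forall>x\<in>A. f x \<le> s"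
  then obtain s where "\<And>x. x \<in> A \<Longrightarrow> f x \<le> s" by blast
  then have "(\<Squnion>x\<in>A. ereal (f x)) \<le> ereal s" by (intro SUP_least) simp
  then show "(\<Squnion>x\<in>A. ereal (f x)) < \<infinity>" using order.strict_trans1 by fastforce
qed

locale bounded_on_C_one =
  fixes M :: "'a measure" and C :: "('a \<Rightarrow> real) set" and f :: "('a \<Rightarrow> real) \<Rightarrow> real" and s :: real
  assumes C_Linf: "C \<subseteq> Linf M" and cone: "convex_cone_fun C" and f_dual: "f \<in> Linf_dual M"
    and f_le: "\<And>x. x \<in> C_one M C \<Longrightarrow> f x \<le> s"
begin

lemma f_le_scaled:
  assumes "x \<in> C" and "0 < t" and "AE \<omega> in M. - x \<omega> \<le> t"
  shows "f x \<le> s * t"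
proof -
  have "(\<lambda>\<omega>. (1 / t) * x \<omega>) \<in> C_one M C"
    using assms convex_cone_fun_scale[OF cone \<open>x \<in> C\<close>, of "1 / t"] unfolding C_one_def
    by (auto elim!: eventually_mono simp: field_simps)
  moreover have "f (\<lambda>\<omega>. (1 / t) * x \<omega>) = f x / t"
    using Linf_dual_scale[OF f_dual, of x "1 / t"] C_Linf \<open>x \<in> C\<close> by auto
  ultimately have "f x / t \<le> s" using f_le by metis
  then show ?thesis using \<open>0 < t\<close> by (simp add: field_simps)
qed

definition cover_values :: "('a \<Rightarrow> real) \<Rightarrow> real set" where
  "cover_values y = {s * r - f x | x r. x \<in> C \<and> 0 \<le> r \<and> (AE \<omega> in M. y \<omega> \<le> x \<omega> + r)}"

definition cover_gauge :: "('a \<Rightarrow> real) \<Rightarrow> real" where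
  "cover_gauge y = Inf (cover_values y)"

lemma cover_valuesI: "x \<in> C \<Longrightarrow> 0 \<le> r \<Longrightarrow> AE \<omega> in M. y \<omega> \<le> x \<omega> + r \<Longrightarrow> s * r - f x \<in> cover_values y"
  unfolding cover_values_def by blast

lemma cover_values_nonempty_bdd_below:
  assumes "y \<in> Linf M"
  shows "cover_values y \<noteq> {}" and "bdd_below (cover_values y)"
proof -
  obtain B0 where "AE \<omega> in M. \<bar>y \<omega>\<bar> \<le> B0"
    using assms unfolding Linf_def by blast
  then obtain B where "0 \<le> B" and B: "AE \<omega> in M. \<bar>y \<omega>\<bar> \<le> B"
    by (intro that[of "max B0 0"]) (auto elim: eventually_mono)
  have "s * B - f (\<lambda>\<omega>. 0) \<in> cover_values y"
    using B \<open>0 \<le> B\<close> by (intro cover_valuesI convex_cone_fun_zero[OF cone]) (auto elim: eventually_mono)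
  then show "cover_values y \<noteq> {}" by blast
  have "- s * (B + 1) \<le> v" if v_in: "v \<in> cover_values y" for v
  proof -
    obtain x r where "x \<in> C" "0 \<le> r" and cover: "AE \<omega> in M. y \<omega> \<le> x \<omega> + r" and v: "v = s * r - f x"
      using v_in unfolding cover_values_def by blast
    have "AE \<omega> in M. - x \<omega> \<le> r + B + 1" using cover B by eventually_elim auto
    then have "f x \<le> s * (r + B + 1)" using f_le_scaled \<open>x \<in> C\<close> \<open>0 \<le> r\<close> \<open>0 \<le> B\<close> by simp
    then show ?thesis using v by (simp add: algebra_simps)
  qed
  then show "bdd_below (cover_values y)" by (rule bdd_belowI)
qed

lemma cover_gauge_le:
  "y \<in> Linf M \<Longrightarrow> x \<in> C \<Longrightarrow> 0 \<le> r \<Longrightarrow> AE \<omega> in M. y \<omega> \<le> x \<omega> + r \<Longrightarrow> cover_gauge y \<le> s * r - f x"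
  unfolding cover_gauge_def by (intro cInf_lower cover_valuesI cover_values_nonempty_bdd_below)

lemma cover_gauge_subadditive:
  assumes "y \<in> Linf M" and "y' \<in> Linf M"
  shows "cover_gauge (\<lambda>\<omega>. y \<omega> + y' \<omega>) \<le> cover_gauge y + cover_gauge y'"
  unfolding cover_gauge_def
proof (rule cInf_le_cInf_add)
  show "cover_values y \<noteq> {}" "cover_values y' \<noteq> {}"
    using assms by (simp_all add: cover_values_nonempty_bdd_below)
  show "bdd_below (cover_values (\<lambda>\<omega>. y \<omega> + y' \<omega>))"
    using Linf_add[OF assms] by (rule cover_values_nonempty_bdd_below)
  show "v + v' \<in> cover_values (\<lambda>\<omega>. y \<omega> + y' \<omega>)"
    if v_in: "v \<in> cover_values y" and v'_in: "v' \<in> cover_values y'" for v v'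
  proof -
    obtain x r x' r' where "x \<in> C" "0 \<le> r" "AE \<omega> in M. y \<omega> \<le> x \<omega> + r" "v = s * r - f x"
      and "x' \<in> C" "0 \<le> r'" "AE \<omega> in M. y' \<omega> \<le> x' \<omega> + r'" "v' = s * r' - f x'"
      using v_in v'_in unfolding cover_values_def by blast
    have "f (\<lambda>\<omega>. x \<omega> + x' \<omega>) = f x + f x'"
      using Linf_dual_add[OF f_dual] C_Linf \<open>x \<in> C\<close> \<open>x' \<in> C\<close> by blast
    then have "v + v' = s * (r + r') - f (\<lambda>\<omega>. x \<omega> + x' \<omega>)"
      using \<open>v = s * r - f x\<close> \<open>v' = s * r' - f x'\<close> by (simp add: algebra_simps)
    also have "\<dots> \<in> cover_values (\<lambda>\<omega>. y \<omega> + y' \<omega>)"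
    proof (rule cover_valuesI)
      show "(\<lambda>\<omega>. x \<omega> + x' \<omega>) \<in> C" using \<open>x \<in> C\<close> \<open>x' \<in> C\<close> by (rule convex_cone_fun_add[OF cone])
      show "0 \<le> r + r'" using \<open>0 \<le> r\<close> \<open>0 \<le> r'\<close> by simp
      show "AE \<omega> in M. y \<omega> + y' \<omega> \<le> (x \<omega> + x' \<omega>) + (r + r')"
        using \<open>AE \<omega> in M. y \<omega> \<le> x \<omega> + r\<close> \<open>AE \<omega> in M. y' \<omega> \<le> x' \<omega> + r'\<close>
        by eventually_elim simp
    qed
    finally show ?thesis .
  qed
qed

lemma cover_values_scale_subset:
  assumes "0 \<le> c"
  shows "(\<lambda>v. c * v) ` cover_values y \<subseteq> cover_values (\<lambda>\<omega>. c * y \<omega>)"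
proof
  fix w assume "w \<in> (\<lambda>v. c * v) ` cover_values y"
  then obtain x r where "x \<in> C" "0 \<le> r" and cover: "AE \<omega> in M. y \<omega> \<le> x \<omega> + r" and w: "w = c * (s * r - f x)"
    unfolding cover_values_def by blast
  have "AE \<omega> in M. c * y \<omega> \<le> c * x \<omega> + c * r"
    using cover by eventually_elim (metis assms distrib_left mult_left_mono)
  moreover have "w = s * (c * r) - f (\<lambda>\<omega>. c * x \<omega>)"
    using w Linf_dual_scale[OF f_dual, of x c] C_Linf \<open>x \<in> C\<close> by (auto simp: algebra_simps)
  moreover have "(\<lambda>\<omega>. c * x \<omega>) \<in> C" using \<open>x \<in> C\<close> assms by (rule convex_cone_fun_scale[OF cone])
  ultimately show "w \<in> cover_values (\<lambda>\<omega>. c * y \<omega>)"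
    using cover_valuesI[of "\<lambda>\<omega>. c * x \<omega>" "c * r"] assms \<open>0 \<le> r\<close> by simp
qed

lemma cover_gauge_pos_homogeneous:
  assumes "y \<in> Linf M" and "0 < c"
  shows "cover_gauge (\<lambda>\<omega>. c * y \<omega>) = c * cover_gauge y"
proof -
  have "cover_values (\<lambda>\<omega>. c * y \<omega>) \<subseteq> (\<lambda>v. c * v) ` cover_values y"
  proof
    fix w assume "w \<in> cover_values (\<lambda>\<omega>. c * y \<omega>)"
    then have "(1 / c) * w \<in> cover_values (\<lambda>\<omega>. (1 / c) * (c * y \<omega>))"
      using cover_values_scale_subset[of "1 / c" "\<lambda>\<omega>. c * y \<omega>"] \<open>0 < c\<close> by auto
    moreover have "w = c * ((1 / c) * w)" using \<open>0 < c\<close> by simp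
    ultimately show "w \<in> (\<lambda>v. c * v) ` cover_values y" using \<open>0 < c\<close> by (intro image_eqI) auto
  qed
  then have "cover_values (\<lambda>\<omega>. c * y \<omega>) = (\<lambda>v. c * v) ` cover_values y"
    using cover_values_scale_subset[of c y] \<open>0 < c\<close> by auto
  moreover have "c * Inf (cover_values y) = (INF v\<in>cover_values y. c * v)"
  proof (rule continuous_at_Inf_mono)
    show "mono ((*) c)" using \<open>0 < c\<close> by (intro monoI mult_left_mono) simp_all
    show "continuous (at_right (Inf (cover_values y))) ((*) c)" by (intro continuous_intros)
  qed (use cover_values_nonempty_bdd_below[OF \<open>y \<in> Linf M\<close>] in auto)
  ultimately show ?thesis unfolding cover_gauge_def by simp
qed

theorem exists_polar_majorant: "\<exists>g\<in>Linf_dual M. dual_ge M g f \<and> g \<in> polar M C"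
proof -
  have "\<exists>h. (\<forall>x\<in>Linf M. \<forall>y\<in>Linf M. h (x + y) = h x + h y) \<and>
      (\<forall>x\<in>Linf M. \<forall>c. h (\<lambda>\<omega>. c * x \<omega>) = c * h x) \<and> (\<forall>x\<in>Linf M. h x \<le> cover_gauge x)"
    by (rule pointwise.hahn_banach_sublinear[OF subspace_Linf])
      (simp_all add: plus_fun_def cover_gauge_subadditive cover_gauge_pos_homogeneous)
  then obtain h where h_add: "\<And>x y. x \<in> Linf M \<Longrightarrow> y \<in> Linf M \<Longrightarrow> h (\<lambda>\<omega>. x \<omega> + y \<omega>) = h x + h y"
    and h_scale: "\<And>x c. x \<in> Linf M \<Longrightarrow> h (\<lambda>\<omega>. c * x \<omega>) = c * h x"
    and h_le: "\<And>x. x \<in> Linf M \<Longrightarrow> h x \<le> cover_gauge x"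
    unfolding plus_fun_def by blast
  have h_pos: "0 \<le> h z" if "z \<in> Linf_pos M" for z
  proof -
    have "z \<in> Linf M" and "AE \<omega> in M. 0 \<le> z \<omega>" using that unfolding Linf_pos_def by auto
    have minus_z: "(\<lambda>\<omega>. (- 1) * z \<omega>) \<in> Linf M" using \<open>z \<in> Linf M\<close> by (rule Linf_scale)
    then have "h (\<lambda>\<omega>. (- 1) * z \<omega>) \<le> cover_gauge (\<lambda>\<omega>. (- 1) * z \<omega>)" by (rule h_le)
    also have "\<dots> \<le> s * 0 - f (\<lambda>\<omega>. 0)"
      by (rule cover_gauge_le[OF minus_z convex_cone_fun_zero[OF cone] order_refl])
        (use \<open>AE \<omega> in M. 0 \<le> z \<omega>\<close> in \<open>auto elim: eventually_mono\<close>)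
    finally show ?thesis using h_scale[OF \<open>z \<in> Linf M\<close>, of "- 1"] Linf_dual_zero[OF f_dual] by simp
  qed
  have h_C: "h x \<le> - f x" if "x \<in> C" for x
  proof -
    have "x \<in> Linf M" using that C_Linf by blast
    then have "h x \<le> cover_gauge x" by (rule h_le)
    also have "\<dots> \<le> s * 0 - f x" using \<open>x \<in> Linf M\<close> that by (intro cover_gauge_le) auto
    finally show ?thesis by simp
  qed
  define g where "g x = f x + h x" for x
  have "h \<in> Linf_dual M" using h_add h_scale h_pos by (rule positive_linear_in_Linf_dual)
  then have "g \<in> Linf_dual M" unfolding g_def by (rule Linf_dual_plus[OF f_dual])
  moreover have "dual_ge M g f" unfolding dual_ge_def g_def using h_pos by simp
  moreover have "g \<in> polar M C"
    unfolding polar_def using \<open>g \<in> Linf_dual M\<close> h_C by (force simp: g_def)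
  ultimately show ?thesis by blast
qed

end

lemma polar_majorant_bounds_C_one:
  assumes "C \<subseteq> Linf M" and "f \<in> Linf_dual M" and "g \<in> Linf_dual M"
    and "dual_ge M g f" and "g \<in> polar M C" and "x \<in> C_one M C"
  shows "f x \<le> g (\<lambda>\<omega>. 1) - f (\<lambda>\<omega>. 1)"
proof -
  have "x \<in> C" "x \<in> Linf M" and "AE \<omega> in M. max (- x \<omega>) 0 \<le> 1"
    using assms unfolding C_one_def by auto
  then have "(\<lambda>\<omega>. 1 + x \<omega>) \<in> Linf_pos M"
    unfolding Linf_pos_def using Linf_add[OF Linf_const] by (auto elim: eventually_mono)
  then have "0 \<le> g (\<lambda>\<omega>. 1 + x \<omega>) - f (\<lambda>\<omega>. 1 + x \<omega>)"
    using \<open>dual_ge M g f\<close> unfolding dual_ge_def by blast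
  moreover have "g x \<le> 0" using \<open>g \<in> polar M C\<close> \<open>x \<in> C\<close> unfolding polar_def by blast
  ultimately show ?thesis
    using Linf_dual_add[OF \<open>f \<in> Linf_dual M\<close> Linf_const \<open>x \<in> Linf M\<close>]
      Linf_dual_add[OF \<open>g \<in> Linf_dual M\<close> Linf_const \<open>x \<in> Linf M\<close>]
    by simp
qed

theorem corollary1:
  fixes M :: "'a measure" and C :: "('a \<Rightarrow> real) set" and f :: "('a \<Rightarrow> real) \<Rightarrow> real"
  assumes "prob_space M"
    and "C \<subseteq> Linf M"
    and "convex_cone_fun C"
    and "\<forall>x\<in>C \<inter> Linf_pos M. AE \<omega> in M. x \<omega> = 0"
    and "f \<in> Linf_dual M"
  shows "(\<Squnion>x\<in>C_one M C. ereal (f x)) < \<infinity> \<longleftrightarrow>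
         (\<exists>g\<in>Linf_dual M. dual_ge M g f \<and> g \<in> polar M C)"
proof -
  have "(\<Squnion>x\<in>C_one M C. ereal (f x)) < \<infinity> \<longleftrightarrow> (\<exists>s. \<forall>x\<in>C_one M C. f x \<le> s)"
    by (rule SUP_ereal_less_infinity_iff)
  also have "\<dots> \<longleftrightarrow> (\<exists>g\<in>Linf_dual M. dual_ge M g f \<and> g \<in> polar M C)"
  proof
    assume "\<exists>s. \<forall>x\<in>C_one M C. f x \<le> s"
    then obtain s where "\<And>x. x \<in> C_one M C \<Longrightarrow> f x \<le> s" by blast
    then interpret bounded_on_C_one M C f s
      using assms by unfold_locales
    show "\<exists>g\<in>Linf_dual M. dual_ge M g f \<and> g \<in> polar M C"
      by (rule exists_polar_majorant)
  next
    assume "\<exists>g\<in>Linf_dual M. dual_ge M g f \<and> g \<in> polar M C"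
    then show "\<exists>s. \<forall>x\<in>C_one M C. f x \<le> s"
      using polar_majorant_bounds_C_one[OF assms(2,5)] by blast
  qed
  finally show ?thesis .
qed

end
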